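(* Let $Q$ be a polyhedral partially ordered abelian group and $D\subseteq Q$ a downset. Then $D=\bigcup_{\tau}\Gamma_\tau(D_\tau)$, the union over all faces $\tau$ of the positive cone $Q_+$.
   Context: A partially ordered abelian group is an abelian group $Q$ generated by a submonoid $Q_+$ (positive cone) whose only unit is $0$; $q\preceq q'$ iff $q'-q\in Q_+$. A face is a submonoid $\sigma\subseteq Q_+$ such that $Q_+\setminus\sigma$ is an ideal of the monoid $Q_+$; $Q$ is polyhedral if there are finitely many faces. A downset is a subset $D\subseteq Q$ with $D-Q_+=D$. For a face $\tau$ and downset $D$: the localization of $D$ along $\tau$ is $D_\tau=\{q\in D: q+\tau\subseteq D\}$ (again a downset). An element $q\in D$ is globally supported on $\tau$ (in $D$) if $q\notin D_{\tau'}$ for every face $\tau'\not\subseteq\tau$; $\Gamma_\tau D$ is the set of such elements. Thus $\Gamma_\tau(D_\tau)$ is the set of $q\in D_\tau$ with $q\notin(D_\tau)_{\tau'}$ for every face $\tau'\not\subseteq\tau$ (the local $\tau$-support of $D$). *)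

theory Defs
  imports Main
begin

definition submonoid :: "'a::ab_group_add set \<Rightarrow> bool" where
  "submonoid M \<longleftrightarrow> 0 \<in> M \<and> (\<forall>x\<in>M. \<forall>y\<in>M. x + y \<in> M)"

definition pos_cone :: "'a::ab_group_add set \<Rightarrow> bool" where
  "pos_cone P \<longleftrightarrow> submonoid P
     \<and> (\<forall>x\<in>P. -x \<in> P \<longrightarrow> x = 0)
     \<and> (\<forall>q. \<exists>a\<in>P. \<exists>b\<in>P. q = a - b)"

definition is_face :: "'a::ab_group_add set \<Rightarrow> 'a set \<Rightarrow> bool" where
  "is_face P \<sigma> \<longleftrightarrow> submonoid \<sigma> \<and> \<sigma> \<subseteq> P
     \<and> (\<forall>x\<in>P - \<sigma>. \<forall>p\<in>P. x + p \<in> P - \<sigma>)"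

definition polyhedral :: "'a::ab_group_add set \<Rightarrow> bool" where
  "polyhedral P \<longleftrightarrow> finite {\<sigma>. is_face P \<sigma>}"

definition downset :: "'a::ab_group_add set \<Rightarrow> 'a set \<Rightarrow> bool" where
  "downset P D \<longleftrightarrow> {d - p | d p. d \<in> D \<and> p \<in> P} = D"

definition localize :: "'a::ab_group_add set \<Rightarrow> 'a set \<Rightarrow> 'a set" where
  "localize D \<tau> = {q \<in> D. \<forall>t\<in>\<tau>. q + t \<in> D}"

definition glob_supp :: "'a::ab_group_add set \<Rightarrow> 'a set \<Rightarrow> 'a set \<Rightarrow> 'a set" where
  "glob_supp P \<tau> D = {q \<in> D. \<forall>\<tau>'. is_face P \<tau>' \<and> \<not> \<tau>' \<subseteq> \<tau> \<longrightarrow> q \<notin> localize D \<tau>'}"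

end

theory Submission
  imports Defs
begin

text \<open>Given q \<in> D, the faces \<tau> with q \<in> D_\<tau> form a finite family containing {0}; pick a
maximal one. If q were in (D_\<tau>)_\<tau>' for a face \<tau>' \<not>\<subseteq> \<tau>, then q would lie in D_F for
the face F generated by \<tau> and \<tau>', which strictly contains \<tau>, contradicting maximality.\<close>

lemma downset_diff_mem:
  assumes "downset P D" "d \<in> D" "p \<in> P"
  shows "d - p \<in> D"
  using assms unfolding downset_def by blast

lemma localize_subset: "localize D \<tau> \<subseteq> D"
  unfolding localize_def by auto

lemma glob_supp_subset: "glob_supp P \<tau> D \<subseteq> D"
  unfolding glob_supp_def by auto

lemma mem_localize_zero: "q \<in> D \<Longrightarrow> q \<in> localize D {0}"
  unfolding localize_def by simp

lemma is_face_zero: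
  assumes "pos_cone P"
  shows "is_face P {0}"
proof -
  have P: "submonoid P" and pointed: "\<And>x. x \<in> P \<Longrightarrow> -x \<in> P \<Longrightarrow> x = 0"
    using assms unfolding pos_cone_def by auto
  have "x + p \<in> P - {0}" if x: "x \<in> P - {0}" and p: "p \<in> P" for x p
  proof -
    have "x + p \<noteq> 0"
    proof
      assume "x + p = 0"
      then have "-x = p" by (simp add: add_eq_0_iff)
      with pointed x p show False by auto
    qed
    with P x p show ?thesis unfolding submonoid_def by auto
  qed
  with P show ?thesis unfolding is_face_def submonoid_def by auto
qed

definition face_join :: "'a::ab_group_add set \<Rightarrow> 'a set \<Rightarrow> 'a set \<Rightarrow> 'a set" where
  "face_join P \<tau> \<tau>' = {p \<in> P. \<exists>x\<in>P. \<exists>a\<in>\<tau>. \<exists>b\<in>\<tau>'. p + x = a + b}"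

lemma face_join_upper:
  assumes "submonoid P" "is_face P \<tau>" "is_face P \<tau>'"
  shows "\<tau> \<subseteq> face_join P \<tau> \<tau>'" "\<tau>' \<subseteq> face_join P \<tau> \<tau>'"
proof -
  have 0: "0 \<in> P" "0 \<in> \<tau>" "0 \<in> \<tau>'" and "\<tau> \<subseteq> P" "\<tau>' \<subseteq> P"
    using assms unfolding is_face_def submonoid_def by auto
  have "a + 0 = a + 0" "b + 0 = 0 + b" for a b :: 'a by simp_all
  with 0 \<open>\<tau> \<subseteq> P\<close> \<open>\<tau>' \<subseteq> P\<close> show "\<tau> \<subseteq> face_join P \<tau> \<tau>'" "\<tau>' \<subseteq> face_join P \<tau> \<tau>'"
    unfolding face_join_def by blast+
qed

lemma is_face_face_join:
  assumes P: "submonoid P" and "is_face P \<tau>" "is_face P \<tau>'"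
  shows "is_face P (face_join P \<tau> \<tau>')"
proof -
  let ?F = "face_join P \<tau> \<tau>'"
  have add_P: "\<And>x y. x \<in> P \<Longrightarrow> y \<in> P \<Longrightarrow> x + y \<in> P"
    using P unfolding submonoid_def by auto
  have add_faces: "\<And>x y. x \<in> \<tau> \<Longrightarrow> y \<in> \<tau> \<Longrightarrow> x + y \<in> \<tau>"
    "\<And>x y. x \<in> \<tau>' \<Longrightarrow> y \<in> \<tau>' \<Longrightarrow> x + y \<in> \<tau>'"
    using assms unfolding is_face_def submonoid_def by auto
  have "0 \<in> ?F"
    using face_join_upper[OF assms] assms(2) unfolding is_face_def submonoid_def by blast
  moreover have "p + p' \<in> ?F" if "p \<in> ?F" "p' \<in> ?F" for p p'
  proof -
    from that obtain x a b x' a' b' where h: "p \<in> P" "x \<in> P" "a \<in> \<tau>" "b \<in> \<tau>'" "p + x = a + b"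
      "p' \<in> P" "x' \<in> P" "a' \<in> \<tau>" "b' \<in> \<tau>'" "p' + x' = a' + b'"
      unfolding face_join_def by blast
    then have "(p + p') + (x + x') = (a + a') + (b + b')"
      by (simp add: algebra_simps)
    with h add_P add_faces show ?thesis unfolding face_join_def by blast
  qed
  moreover have "y + p \<in> P - ?F" if y: "y \<in> P - ?F" and p: "p \<in> P" for y p
  proof -
    have "y + p \<notin> ?F"
    proof
      assume "y + p \<in> ?F"
      then obtain x a b where "x \<in> P" "a \<in> \<tau>" "b \<in> \<tau>'" "y + (p + x) = a + b"
        unfolding face_join_def by (auto simp: add.assoc)
      with y p add_P have "y \<in> ?F" unfolding face_join_def by blast
      with y show False by blast
    qed
    with y p add_P show ?thesis by blast
  qed
  moreover have "?F \<subseteq> P" unfolding face_join_def by blast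
  ultimately show ?thesis unfolding is_face_def submonoid_def by blast
qed

lemma localize_localize_subset_face_join:
  assumes "downset P D"
  shows "localize (localize D \<tau>) \<tau>' \<subseteq> localize D (face_join P \<tau> \<tau>')"
proof
  fix q assume q: "q \<in> localize (localize D \<tau>) \<tau>'"
  have "q + f \<in> D" if f: "f \<in> face_join P \<tau> \<tau>'" for f
  proof -
    obtain x a b where "x \<in> P" "a \<in> \<tau>" "b \<in> \<tau>'" and sum: "f + x = a + b"
      using f unfolding face_join_def by blast
    with q have "q + b + a - x \<in> D"
      using downset_diff_mem[OF assms] unfolding localize_def by blast
    moreover have "q + b + a - x = q + f" using sum by (simp add: algebra_simps eq_diff_eq)
    ultimately show ?thesis by simp
  qed
  with q show "q \<in> localize D (face_join P \<tau> \<tau>')"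
    using localize_subset unfolding localize_def by blast
qed
lemma mem_glob_supp_localize_if_maximal:
  assumes "submonoid P" "downset P D" "is_face P \<tau>" "q \<in> localize D \<tau>"
    and maximal: "\<And>\<sigma>. is_face P \<sigma> \<Longrightarrow> q \<in> localize D \<sigma> \<Longrightarrow> \<tau> \<subseteq> \<sigma> \<Longrightarrow> \<sigma> = \<tau>"
  shows "q \<in> glob_supp P \<tau> (localize D \<tau>)"
  unfolding glob_supp_def
proof (intro CollectI conjI allI impI notI)
  show "q \<in> localize D \<tau>" by fact
  fix \<tau>' assume \<tau>': "is_face P \<tau>' \<and> \<not> \<tau>' \<subseteq> \<tau>" and "q \<in> localize (localize D \<tau>) \<tau>'"
  then have "q \<in> localize D (face_join P \<tau> \<tau>')"
    using localize_localize_subset_face_join[OF assms(2)] by blast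
  then have "face_join P \<tau> \<tau>' = \<tau>"
    using maximal is_face_face_join face_join_upper assms(1,3) \<tau>' by blast
  then show False using face_join_upper(2)[OF assms(1,3)] \<tau>' by blast
qed

theorem theorem3p10:
  fixes P D :: "'a::ab_group_add set"
  assumes "pos_cone P" and "polyhedral P" and "downset P D"
  shows "D = (\<Union>\<tau>\<in>{\<tau>. is_face P \<tau>}. glob_supp P \<tau> (localize D \<tau>))"
proof
  show "(\<Union>\<tau>\<in>{\<tau>. is_face P \<tau>}. glob_supp P \<tau> (localize D \<tau>)) \<subseteq> D"
    using glob_supp_subset localize_subset by blast
  show "D \<subseteq> (\<Union>\<tau>\<in>{\<tau>. is_face P \<tau>}. glob_supp P \<tau> (localize D \<tau>))"
  proof
    fix q assume "q \<in> D"
    let ?S = "{\<tau>. is_face P \<tau> \<and> q \<in> localize D \<tau>}"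
    have "finite ?S"
      using assms(2) unfolding polyhedral_def by (rule finite_subset[rotated]) auto
    moreover have "{0} \<in> ?S"
      using is_face_zero[OF assms(1)] mem_localize_zero[OF \<open>q \<in> D\<close>] by simp
    ultimately obtain \<tau> where \<tau>: "\<tau> \<in> ?S" and maximal: "\<And>\<sigma>. \<sigma> \<in> ?S \<Longrightarrow> \<tau> \<subseteq> \<sigma> \<Longrightarrow> \<tau> = \<sigma>"
      using finite_has_maximal[of ?S] by blast
    have "submonoid P" using assms(1) unfolding pos_cone_def by simp
    from mem_glob_supp_localize_if_maximal[OF this assms(3)] \<tau> maximal
    have "q \<in> glob_supp P \<tau> (localize D \<tau>)" by blast
    with \<tau> show "q \<in> (\<Union>\<tau>\<in>{\<tau>. is_face P \<tau>}. glob_supp P \<tau> (localize D \<tau>))" by blast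
  qed
qed

end
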